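(* For every integer $n$, $$(1+A(n,5))(1+A(n,11))\prod_{p\ge 17}(1+A(n,p))\ \ge\ 0.902985,$$ where the product runs over primes $p\ge 17$.
   Context: For integers $q\ge1$, $a$ and $i\in\{2,3\}$ let $C_i(q,a)=\sum_{1\le m\le q,\ (m,q)=1} e(am^i/q)$, where $e(x)=e^{2\pi i x}$. For an integer $n$ define $$A(n,q)=\frac{\mu(q)}{\varphi(q)^4}\sum_{\substack{1\le a\le q\\ (a,q)=1}} C_2(q,a)\,C_3(q,a)^2\,e\!\left(\frac{-an}{q}\right),$$ with $\mu$ the Möbius function and $\varphi$ Euler's function. *)

theory Defs
  imports "HOL-Analysis.Analysis" "HOL-Number_Theory.Number_Theory" "HOL-Computational_Algebra.Squarefree"
begin

definition ee :: "real \<Rightarrow> complex" where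
  "ee x = exp (2 * of_real pi * \<i> * of_real x)"

definition moebius :: "nat \<Rightarrow> int" where
  "moebius q = (if squarefree q then (-1) ^ card (prime_factors q) else 0)"

definition Csum :: "nat \<Rightarrow> nat \<Rightarrow> int \<Rightarrow> complex" where
  "Csum i q a = (\<Sum>m \<in> {m \<in> {1..q}. coprime m q}. ee (of_int a * of_nat m ^ i / of_nat q))"

definition Aterm :: "int \<Rightarrow> nat \<Rightarrow> complex" where
  "Aterm n q = of_int (moebius q) / of_nat (totient q) ^ 4 *
     (\<Sum>a \<in> {a \<in> {1..q}. coprime a q}.
        Csum 2 q (int a) * Csum 3 q (int a) ^ 2 * ee (- (of_nat a * of_int n) / of_nat q))"

end

theory Submission
  imports Defs
begin

text \<open>For a prime \<open>p \<ge> 5\<close> fix a primitive root \<open>g\<close>. Summing over the characters of order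
  dividing 2, resp. \<open>gcd(3, p - 1)\<close>, writes \<open>C\<^sub>2(p, a)\<close> and \<open>C\<^sub>3(p, a)\<close> as sums of Gauss sums
  \<open>\<tau>(\<chi>, a) = \<chi>(a)\<inverse> \<tau>(\<chi>, 1)\<close>. Summing a product of three of them against \<open>e(-an/p)\<close>
  gives \<open>\<tau>(\<chi>\<^sub>1) \<tau>(\<chi>\<^sub>2) \<tau>(\<chi>\<^sub>3) \<tau>(\<chi>\<^sub>1\<chi>\<^sub>2\<chi>\<^sub>3, -n)\<close> up to conjugation, and \<open>|\<tau>(\<chi>)| = \<surd>p\<close> for
  \<open>\<chi> \<noteq> 1\<close>. Counting the triples yields \<open>|A(n, p)| \<le> (4p\<^sup>2 + 6p\<surd>p + 7p + 1) / (p - 1)\<^sup>4\<close> if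
  \<open>3 | p - 1\<close> and \<open>|A(n, p)| \<le> (p + 1) / (p - 1)\<^sup>4\<close> otherwise; \<open>A(n, p)\<close> is real because
  \<open>a \<mapsto> p - a\<close> conjugates its defining sum. Both bounds are dominated by telescoping sums, so
  the factors with \<open>p \<ge> 17\<close> deviate from 1 by at most \<open>1/225 + 5/72\<close> in total, and the
  factors at 5 and 11 are at least \<open>1 - 6/256\<close> and \<open>1 - 12/10\<^sup>4\<close>.\<close>

section \<open>Additive characters\<close>

lemma ee_add: "ee (x + y) = ee x * ee y"
  unfolding ee_def by (simp add: distrib_left exp_add)

lemma ee_of_int [simp]: "ee (of_int k) = 1"
proof -
  have "2 * of_real pi * \<i> * of_real (of_int k) = 2 * of_real pi * of_int k * \<i>"
    by simp
  then show ?thesis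
    unfolding ee_def using exp_integer_2pi[of "of_int k"] by (simp add: mult_ac)
qed

lemma ee_0 [simp]: "ee 0 = 1"
  using ee_of_int[of 0] by (simp only: of_int_0)

lemma ee_eq_1_iff: "ee x = 1 \<longleftrightarrow> x \<in> \<int>"
proof
  assume "ee x = 1"
  then obtain m :: int where "Im (2 * of_real pi * \<i> * of_real x) = of_int (2 * m) * pi"
    unfolding ee_def exp_eq_1 by blast
  then have "x = of_int m" by simp
  then show "x \<in> \<int>" by simp
qed (metis Ints_cases ee_of_int)

lemma cnj_ee: "cnj (ee x) = ee (- x)"
  unfolding ee_def by (simp add: exp_cnj)

lemma ee_power: "ee x ^ k = ee (of_nat k * x)"
  by (induction k) (auto simp: ee_add distrib_right)

definition ep :: "nat \<Rightarrow> int \<Rightarrow> complex" where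
  "ep p x = ee (of_int x / of_nat p)"

lemma ep_add: "ep p (x + y) = ep p x * ep p y"
  unfolding ep_def by (simp add: add_divide_distrib ee_add)

lemma ep_0 [simp]: "ep p 0 = 1"
  using ee_of_int[of 0] by (simp add: ep_def)

lemma ep_multiple: "p > 0 \<Longrightarrow> int p dvd x \<Longrightarrow> ep p x = 1"
  by (auto simp: ep_def)

lemma ep_cong:
  assumes "p > 0" "[x = y] (mod int p)"
  shows "ep p x = ep p y"
proof -
  from assms(2) obtain k where "x = y + int p * k"
    by (metis cong_iff_lin cong_sym)
  then show ?thesis
    using assms(1) by (simp add: ep_add ep_multiple)
qed

lemma cnj_ep: "cnj (ep p x) = ep p (- x)"
  unfolding ep_def by (simp add: cnj_ee)

lemma ep_eq_1_iff:
  assumes "p > 0"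
  shows "ep p x = 1 \<longleftrightarrow> int p dvd x"
proof
  assume "ep p x = 1"
  then obtain k where "of_int x / of_nat p = (of_int k :: real)"
    by (auto simp: ep_def ee_eq_1_iff elim: Ints_cases)
  then have "real_of_int x = real_of_int (int p * k)"
    using assms by (simp add: field_simps)
  then have "x = int p * k"
    by (simp only: of_int_eq_iff)
  then show "int p dvd x" by simp
qed (use assms in \<open>simp add: ep_multiple\<close>)

lemma ep_power: "ep p x ^ k = ep p (int k * x)"
  by (induction k) (auto simp: ep_add distrib_right)

lemma sum_ep_lessThan:
  assumes "p > 0"
  shows "(\<Sum>x<p. ep p (b * int x)) = (if int p dvd b then of_nat p else 0)"
proof (cases "int p dvd b")
  case False
  then have "ep p b \<noteq> 1"
    using assms ep_eq_1_iff by blast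
  moreover have "ep p b ^ p = 1"
    using assms by (simp add: ep_power ep_multiple)
  moreover have "(\<Sum>x<p. ep p (b * int x)) = (\<Sum>x<p. ep p b ^ x)"
    by (simp add: ep_power mult.commute)
  ultimately show ?thesis
    using False by (simp add: sum_gp_strict)
qed (use assms in \<open>simp add: ep_multiple\<close>)

section \<open>Roots of unity\<close>

definition unity_root :: "nat \<Rightarrow> complex" where
  "unity_root d = ee (1 / of_nat d)"

lemma unity_root_power_eq_1_iff:
  assumes "d > 0"
  shows "unity_root d ^ j = 1 \<longleftrightarrow> d dvd j"
proof -
  have "unity_root d ^ j = ee (of_nat j / of_nat d)"
    by (simp add: unity_root_def ee_power)
  also have "\<dots> = 1 \<longleftrightarrow> d dvd j"
  proof
    assume "ee (of_nat j / of_nat d) = 1"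
    then obtain k where "of_nat j / of_nat d = (of_int k :: real)"
      by (auto simp: ee_eq_1_iff elim: Ints_cases)
    then have "real_of_int (int j) = real_of_int (int d * k)"
      using assms by (simp add: field_simps)
    then have "int j = int d * k"
      by (simp only: of_int_eq_iff)
    then show "d dvd j"
      by (metis dvd_triv_left int_dvd_int_iff)
  next
    assume "d dvd j"
    then obtain m where "j = d * m" ..
    then show "ee (of_nat j / of_nat d) = 1"
      using assms ee_of_int[of "int m"] by simp
  qed
  finally show ?thesis .
qed

lemma unity_root_2 [simp]: "unity_root 2 = -1"
proof -
  have "2 * of_real pi * \<i> * complex_of_real (1 / 2) = of_real pi * \<i>"
    by simp
  then show ?thesis
    by (simp add: unity_root_def ee_def)
qed

lemma sum_unity_root_powers:
  assumes "d > 0"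
  shows "(\<Sum>j<d. (unity_root d ^ j) ^ t) = (if d dvd t then of_nat d else 0)"
proof -
  define z where "z = unity_root d ^ t"
  have "(\<Sum>j<d. (unity_root d ^ j) ^ t) = (\<Sum>j<d. z ^ j)"
    by (simp add: z_def power_mult[symmetric] mult.commute)
  moreover have "z ^ d = 1"
    using unity_root_power_eq_1_iff[OF assms, of "t * d"]
    by (simp add: z_def power_mult[symmetric])
  moreover have "z = 1 \<longleftrightarrow> d dvd t"
    using unity_root_power_eq_1_iff[OF assms] by (simp add: z_def)
  ultimately show ?thesis
    by (auto simp: sum_gp_strict)
qed

lemma neg_one_power_mult_unity_root_eq_1_iff:
  assumes "odd d"
  shows "(-1) ^ i * unity_root d ^ m = 1 \<longleftrightarrow> even i \<and> d dvd m"
proof (cases "even i")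
  case False
  have "unity_root d ^ m \<noteq> -1"
  proof
    assume "unity_root d ^ m = -1"
    then have "(unity_root d ^ d) ^ m = (-1) ^ d"
      by (metis power_mult mult.commute)
    then show False
      using assms unity_root_power_eq_1_iff[of d d] by (simp add: odd_pos)
  qed
  moreover have "(-1) ^ i * unity_root d ^ m = - (unity_root d ^ m)"
    using False by simp
  ultimately show ?thesis
    using False by (metis minus_minus)
qed (use assms in \<open>simp add: unity_root_power_eq_1_iff odd_pos\<close>)

lemma norm_root_unity: "c ^ L = 1 \<Longrightarrow> L > 0 \<Longrightarrow> norm (c :: complex) = 1"
  using power_eq_1_iff by blast

lemma cnj_mult_root_unity: "c ^ L = 1 \<Longrightarrow> L > 0 \<Longrightarrow> cnj c * c = 1"
  using complex_norm_square[of c] norm_root_unity[of c L] by (simp add: mult.commute)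

lemma power_mod_root_unity:
  fixes c :: "'a :: monoid_mult"
  assumes "c ^ L = 1"
  shows "c ^ (t mod L) = c ^ t"
proof -
  have "c ^ t = c ^ (L * (t div L) + t mod L)"
    by simp
  also have "\<dots> = (c ^ L) ^ (t div L) * c ^ (t mod L)"
    by (simp only: power_add power_mult)
  finally have "c ^ t = (c ^ L) ^ (t div L) * c ^ (t mod L)" .
  then show ?thesis
    using assms by simp
qed

lemma sum_lessThan_periodic:
  fixes F :: "nat \<Rightarrow> 'a :: comm_semiring_1"
  assumes "\<And>s. F (s + M) = F s"
  shows "(\<Sum>s<k * M. F s) = of_nat k * (\<Sum>s<M. F s)"
proof -
  have shift: "F (s + m * M) = F s" for s m
  proof (induction m)
    case (Suc m)
    have "s + Suc m * M = (s + m * M) + M" by simp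
    then show ?case using Suc assms[of "s + m * M"] by (simp only:)
  qed simp
  have "(\<Sum>s<k * M. F s) = (\<Sum>m<k. \<Sum>s\<in>{m * M..<m * M + M}. F s)"
    by (rule sum.nat_group[symmetric])
  also have "\<dots> = (\<Sum>m<k. \<Sum>s<M. F s)"
  proof (rule sum.cong[OF refl])
    fix m
    have "(\<Sum>s\<in>{m * M..<m * M + M}. F s) = (\<Sum>s<M. F (s + m * M))"
      using sum.shift_bounds_nat_ivl[of F 0 "m * M" M] by (simp add: lessThan_atLeast0 add.commute)
    then show "(\<Sum>s\<in>{m * M..<m * M + M}. F s) = (\<Sum>s<M. F s)"
      by (simp add: shift)
  qed
  finally show ?thesis by simp
qed

lemma sum_lessThan_multiples:
  fixes f :: "nat \<Rightarrow> 'a :: comm_monoid_add"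
  assumes "d > 0"
  shows "(\<Sum>t<d * M. if d dvd t then f t else 0) = (\<Sum>s<M. f (d * s))"
proof -
  have "(\<Sum>t<d * M. if d dvd t then f t else 0) = (\<Sum>t\<in>{t \<in> {..<d * M}. d dvd t}. f t)"
    by (rule sum.inter_filter[symmetric]) simp
  also have "{t \<in> {..<d * M}. d dvd t} = (\<lambda>s. d * s) ` {..<M}"
    using assms by (auto elim!: dvdE)
  also have "(\<Sum>t\<in>(\<lambda>s. d * s) ` {..<M}. f t) = (\<Sum>s<M. f (d * s))"
    using assms by (simp add: sum.reindex inj_on_def)
  finally show ?thesis .
qed

lemma sum_lessThan_affine_mod:
  fixes k L :: nat
  assumes "coprime k L"
  shows "(\<Sum>t<L. F ((k * t + r) mod L)) = (\<Sum>t<L. F t)"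
proof (cases "L = 0")
  case False
  have inj: "inj_on (\<lambda>t. (k * t + r) mod L) {..<L}"
  proof
    fix s t
    assume "s \<in> {..<L}" "t \<in> {..<L}" "(k * s + r) mod L = (k * t + r) mod L"
    then have "[k * s = k * t] (mod L)"
      by (metis cong_add_rcancel_nat cong_def)
    then have "[s = t] (mod L)"
      using assms cong_mult_lcancel_nat by blast
    then show "s = t"
      using \<open>s \<in> {..<L}\<close> \<open>t \<in> {..<L}\<close> by (simp add: cong_def)
  qed
  have "(\<lambda>t. (k * t + r) mod L) ` {..<L} = {..<L}"
    by (rule endo_inj_surj) (use inj False in auto)
  then show ?thesis
    using sum.reindex[OF inj, of F] by simp
qed simp

lemma sum_mult_sum_square:
  fixes x y :: "'i \<Rightarrow> complex"
  shows "(\<Sum>i\<in>A. x i) * (\<Sum>j\<in>B. y j) ^ 2 * e = (\<Sum>j\<in>B. \<Sum>k\<in>B. \<Sum>i\<in>A. x i * y j * y k * e)"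
  by (simp add: power2_eq_square sum_distrib_left sum_distrib_right mult_ac)

lemma norm_sum_triple_sum_le:
  fixes f :: "'a \<Rightarrow> 'i \<Rightarrow> 'j \<Rightarrow> 'k \<Rightarrow> complex"
  assumes "\<And>i j k. i \<in> A \<Longrightarrow> j \<in> B \<Longrightarrow> k \<in> C \<Longrightarrow> norm (\<Sum>a\<in>U. f a i j k) \<le> W i j k"
  shows "norm (\<Sum>a\<in>U. \<Sum>i\<in>A. \<Sum>j\<in>B. \<Sum>k\<in>C. f a i j k) \<le> (\<Sum>i\<in>A. \<Sum>j\<in>B. \<Sum>k\<in>C. W i j k)"
proof -
  have "(\<Sum>a\<in>U. \<Sum>i\<in>A. \<Sum>j\<in>B. \<Sum>k\<in>C. f a i j k) = (\<Sum>i\<in>A. \<Sum>j\<in>B. \<Sum>k\<in>C. \<Sum>a\<in>U. f a i j k)"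
    by (subst sum.swap, rule sum.cong, rule refl, subst sum.swap, rule sum.cong, rule refl,
        subst sum.swap, rule refl)
  also have "norm \<dots> \<le> (\<Sum>i\<in>A. norm (\<Sum>j\<in>B. \<Sum>k\<in>C. \<Sum>a\<in>U. f a i j k))"
    by (rule norm_sum)
  also have "\<dots> \<le> (\<Sum>i\<in>A. \<Sum>j\<in>B. norm (\<Sum>k\<in>C. \<Sum>a\<in>U. f a i j k))"
    by (intro sum_mono norm_sum)
  also have "\<dots> \<le> (\<Sum>i\<in>A. \<Sum>j\<in>B. \<Sum>k\<in>C. norm (\<Sum>a\<in>U. f a i j k))"
    by (intro sum_mono norm_sum)
  also have "\<dots> \<le> (\<Sum>i\<in>A. \<Sum>j\<in>B. \<Sum>k\<in>C. W i j k)"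
    by (intro sum_mono assms)
  finally show ?thesis .
qed

section \<open>Gauss sums modulo an odd prime\<close>

locale primroot_mod_prime =
  fixes p g :: nat
  assumes prime_p: "prime p" and odd_p: "odd p" and primroot: "residue_primroot p g"
begin

definition L :: nat where "L = p - 1"

definition gpow :: "nat \<Rightarrow> nat" where "gpow t = g ^ t mod p"

text \<open>For \<open>c ^ L = 1\<close>, \<open>gauss c a\<close> is the Gauss sum \<open>\<tau>(\<chi>, a)\<close> of the multiplicative character
  \<open>\<chi>\<close> with \<open>\<chi>(g ^ t) = c ^ t\<close>; every character modulo \<open>p\<close> arises this way.\<close>
definition gauss :: "complex \<Rightarrow> int \<Rightarrow> complex" where
  "gauss c a = (\<Sum>t<L. c ^ t * ep p (a * int (gpow t)))"

lemma p_gt_1: "p > 1"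
  using prime_p prime_gt_1_nat by blast

lemma p_pos: "p > 0"
  using p_gt_1 by simp

lemma L_pos: "L > 0"
  using p_gt_1 by (simp add: L_def)

lemma two_dvd_L: "2 dvd L"
  using odd_p p_gt_1 by (simp add: L_def)

lemma totient_p: "totient p = L"
  using prime_p by (simp add: totient_prime L_def)

lemma coprime_units: "{m \<in> {1..p}. coprime m p} = {0<..<p}"
  using prime_p by (auto simp: totatives_prime[symmetric] in_totatives_iff)

lemma gpow_bij: "bij_betw gpow {..<L} {0<..<p}"
  using residue_primroot_is_generator[OF p_gt_1 primroot] prime_p
  by (simp add: gpow_def[abs_def] totatives_prime totient_p)

lemma gpow_mod_p [simp]: "gpow t mod p = gpow t"
  by (simp add: gpow_def)

lemma gpow_mod_L: "gpow (t mod L) = gpow t"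
proof -
  have "coprime p g" and "ord p g = L"
    using primroot by (simp_all add: residue_primroot_def totient_p)
  then have "[g ^ (t mod L) = g ^ t] (mod p)"
    using order_divides_expdiff by (simp add: cong_def)
  then show ?thesis
    by (simp add: gpow_def cong_def)
qed

lemma gpow_mult_cong: "[int (gpow s) * int (gpow t) = int (gpow (s + t))] (mod int p)"
  by (simp add: gpow_def cong_def power_add mod_mult_eq zmod_int[symmetric] flip: of_nat_mult)

lemma gpow_power_cong: "[int (gpow s) ^ i = int (gpow (i * s))] (mod int p)"
proof -
  have "[gpow s ^ i = gpow (i * s)] (mod p)"
    by (simp add: gpow_def cong_def power_mod power_mult mult.commute[of i])
  then show ?thesis
    by (metis cong_int_iff of_nat_power)
qed

lemma sum_units_gpow: "(\<Sum>u\<in>{0<..<p}. F u) = (\<Sum>t<L. F (gpow t))"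
  using sum.reindex_bij_betw[OF gpow_bij, of F] by simp

lemma exists_gpow_cong:
  assumes "\<not> int p dvd a"
  obtains r where "[a = int (gpow r)] (mod int p)"
proof -
  have "0 \<le> a mod int p" "a mod int p < int p" "a mod int p \<noteq> 0"
    using assms p_pos by (simp_all add: dvd_eq_mod_eq_0)
  then have "nat (a mod int p) \<in> {0<..<p}"
    by auto
  then have "nat (a mod int p) \<in> gpow ` {..<L}"
    using gpow_bij by (simp add: bij_betw_def)
  then obtain r where "gpow r = nat (a mod int p)"
    by (metis imageE)
  then have "[a = int (gpow r)] (mod int p)"
    using p_pos by (simp add: cong_def)
  then show ?thesis ..
qed

lemma sum_ep_units:
  "(\<Sum>u\<in>{0<..<p}. ep p (b * int u)) = (if int p dvd b then of_nat L else -1)"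
proof -
  have "{..<p} = insert 0 {0<..<p}"
    using p_pos by auto
  then have "(\<Sum>u\<in>{0<..<p}. ep p (b * int u)) = (\<Sum>x<p. ep p (b * int x)) - 1"
    by simp
  then show ?thesis
    using sum_ep_lessThan[OF p_pos, of b] p_gt_1 by (auto simp: L_def of_nat_diff)
qed

lemma gauss_cong: "[a = a'] (mod int p) \<Longrightarrow> gauss c a = gauss c a'"
  unfolding gauss_def by (intro sum.cong refl arg_cong2[where f="(*)"] ep_cong p_pos cong_mult) auto

lemma gauss_gpow:
  assumes "c ^ L = 1"
  shows "gauss c (int (gpow r)) = cnj c ^ r * gauss c 1"
proof -
  have "c ^ r * gauss c (int (gpow r)) = (\<Sum>t<L. c ^ (t + r) * ep p (int (gpow (t + r))))"
    unfolding gauss_def sum_distrib_left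
  proof (intro sum.cong refl)
    fix t
    have "ep p (int (gpow r) * int (gpow t)) = ep p (int (gpow (t + r)))"
      using gpow_mult_cong[of r t] by (intro ep_cong p_pos) (simp add: add.commute)
    then show "c ^ r * (c ^ t * ep p (int (gpow r) * int (gpow t)))
        = c ^ (t + r) * ep p (int (gpow (t + r)))"
      by (simp add: power_add mult_ac)
  qed
  also have "\<dots> = (\<Sum>t<L. c ^ ((t + r) mod L) * ep p (int (gpow ((t + r) mod L))))"
    by (simp add: power_mod_root_unity[OF assms] gpow_mod_L)
  also have "\<dots> = gauss c 1"
    using sum_lessThan_affine_mod[of 1 L "\<lambda>t. c ^ t * ep p (int (gpow t))" r]
    by (simp add: gauss_def)
  finally have "c ^ r * gauss c (int (gpow r)) = gauss c 1" .
  then have "(cnj c * c) ^ r * gauss c (int (gpow r)) = cnj c ^ r * gauss c 1"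
    by (simp add: power_mult_distrib mult.assoc)
  then show ?thesis
    using cnj_mult_root_unity[OF assms L_pos] by simp
qed

lemma gauss_1_1: "gauss 1 1 = -1"
  using sum_ep_units[of 1] p_gt_1 by (simp add: gauss_def sum_units_gpow)

lemma gauss_mult_cnj:
  assumes "c ^ L = 1" "c \<noteq> 1"
  shows "gauss c 1 * cnj (gauss c 1) = of_nat p"
proof -
  have cc: "c * cnj c = 1"
    using cnj_mult_root_unity[OF assms(1) L_pos] by (simp add: mult.commute)
  define H where "H a = gauss c a * cnj (gauss c a)" for a
  have "H (int (gpow r)) = gauss c 1 * cnj (gauss c 1)" for r
    by (simp add: H_def gauss_gpow[OF assms(1)] mult_ac flip: power_mult_distrib) (simp add: cc)
  then have "(\<Sum>u\<in>{0<..<p}. H (int u)) = of_nat L * (gauss c 1 * cnj (gauss c 1))"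
    by (simp add: sum_units_gpow)
  moreover have "(\<Sum>u\<in>{0<..<p}. H (int u)) = of_nat p * of_nat L"
  proof -
    text \<open>Expand \<open>|\<tau>(\<chi>, u)|\<^sup>2\<close> and sum over \<open>u\<close> first: only the diagonal survives.\<close>
    have "(\<Sum>u\<in>{0<..<p}. H (int u)) = (\<Sum>u\<in>{0<..<p}. \<Sum>t<L. \<Sum>s<L.
        (c ^ t * cnj c ^ s) * ep p ((int (gpow t) - int (gpow s)) * int u))"
      unfolding H_def gauss_def cnj_sum sum_product
      by (intro sum.cong refl) (simp add: cnj_ep ep_add[symmetric] algebra_simps)
    also have "\<dots> = (\<Sum>t<L. \<Sum>s<L. (c ^ t * cnj c ^ s) *
        (\<Sum>u\<in>{0<..<p}. ep p ((int (gpow t) - int (gpow s)) * int u)))"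
      by (simp add: sum_distrib_left sum.swap[of _ "{0<..<p}"])
    also have "\<dots> = (\<Sum>t<L. \<Sum>s<L. (c ^ t * cnj c ^ s) * ((if t = s then of_nat p else 0) - 1))"
    proof (intro sum.cong refl arg_cong2[where f = "(*)"])
      fix s t assume "s \<in> {..<L}" "t \<in> {..<L}"
      then have "int p dvd (int (gpow t) - int (gpow s)) \<longleftrightarrow> t = s"
        using gpow_bij p_pos
        by (auto simp: bij_betw_def inj_on_def cong_iff_dvd_diff[symmetric] cong_def
            zmod_int[symmetric] image_subset_iff)
      then show "(\<Sum>u\<in>{0<..<p}. ep p ((int (gpow t) - int (gpow s)) * int u))
          = (if t = s then of_nat p else 0) - 1"
        using p_gt_1 by (simp add: sum_ep_units L_def of_nat_diff)
    qed
    also have "\<dots> = (\<Sum>t<L. (\<Sum>s<L. if t = s then of_nat p * (c ^ t * cnj c ^ t) else 0)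
        - c ^ t * (\<Sum>s<L. cnj c ^ s))"
      unfolding sum_distrib_left sum_subtractf[symmetric]
      by (intro sum.cong refl) (auto simp: algebra_simps)
    also have "\<dots> = (\<Sum>t<L. of_nat p * (c * cnj c) ^ t - c ^ t * (\<Sum>s<L. cnj c ^ s))"
      by (simp add: power_mult_distrib)
    also have "(\<Sum>s<L. cnj c ^ s) = 0"
      using assms cnj_sum[of "\<lambda>s. c ^ s" "{..<L}"] by (simp add: sum_gp_strict)
    finally show ?thesis
      by (simp add: cc)
  qed
  ultimately show ?thesis
    using L_pos by (simp add: mult.commute)
qed

definition gauss_norm :: "complex \<Rightarrow> real" where
  "gauss_norm c = (if c = 1 then 1 else sqrt p)"

lemma norm_gauss:
  assumes "c ^ L = 1"
  shows "norm (gauss c 1) = gauss_norm c"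
proof (cases "c = 1")
  case False
  have "complex_of_real (norm (gauss c 1) ^ 2) = of_nat p"
    using gauss_mult_cnj[OF assms False] complex_norm_square[of "gauss c 1"] by simp
  then have "norm (gauss c 1) ^ 2 = real p"
    by (metis of_real_eq_iff of_real_of_nat_eq)
  then show ?thesis
    using False real_sqrt_unique[of "norm (gauss c 1)" p] by (simp add: gauss_norm_def)
qed (simp add: gauss_1_1 gauss_norm_def)

definition gauss_bound :: "int \<Rightarrow> complex \<Rightarrow> real" where
  "gauss_bound n c = (if int p dvd n then (if c = 1 then real L else 0) else gauss_norm c)"

lemma norm_gauss_le:
  assumes "c ^ L = 1"
  shows "norm (gauss c (- n)) \<le> gauss_bound n c"
proof (cases "int p dvd n")
  case True
  then have "gauss c (- n) = (\<Sum>t<L. c ^ t)"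
    unfolding gauss_def by (intro sum.cong refl) (simp add: ep_multiple p_pos)
  then show ?thesis
    using True assms by (simp add: gauss_bound_def sum_gp_strict)
next
  case False
  then obtain r where "[- n = int (gpow r)] (mod int p)"
    using exists_gpow_cong[of "- n"] by auto
  then have "gauss c (- n) = cnj c ^ r * gauss c 1"
    using gauss_cong gauss_gpow[OF assms] by metis
  then have "norm (gauss c (- n)) = norm (gauss c 1)"
    using norm_root_unity[OF assms L_pos] by (simp add: norm_mult norm_power)
  then show ?thesis
    using False norm_gauss[OF assms] by (simp add: gauss_bound_def)
qed

lemma sum_gauss_triple:
  assumes "c1 ^ L = 1" "c2 ^ L = 1" "c3 ^ L = 1"
  shows "(\<Sum>a\<in>{0<..<p}. gauss c1 (int a) * gauss c2 (int a) * gauss c3 (int a) * ep p (- (int a * n)))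
     = gauss c1 1 * gauss c2 1 * gauss c3 1 * gauss (cnj (c1 * c2 * c3)) (- n)"
proof -
  have "(\<Sum>a\<in>{0<..<p}. gauss c1 (int a) * gauss c2 (int a) * gauss c3 (int a) * ep p (- (int a * n)))
      = (\<Sum>r<L. gauss c1 1 * gauss c2 1 * gauss c3 1 *
           (cnj (c1 * c2 * c3) ^ r * ep p (- n * int (gpow r))))"
    unfolding sum_units_gpow
    by (intro sum.cong refl) (simp add: gauss_gpow assms power_mult_distrib mult_ac)
  then show ?thesis
    by (simp add: gauss_def sum_distrib_left)
qed

lemma norm_sum_gauss_triple_le:
  assumes "c1 ^ L = 1" "c2 ^ L = 1" "c3 ^ L = 1"
  shows "norm (\<Sum>a\<in>{0<..<p}. gauss c1 (int a) * gauss c2 (int a) * gauss c3 (int a) * ep p (- (int a * n)))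
     \<le> gauss_norm c1 * gauss_norm c2 * gauss_norm c3 * gauss_bound n (c1 * c2 * c3)"
proof -
  have "cnj (c1 * c2 * c3) ^ L = 1"
    using assms by (simp add: power_mult_distrib flip: complex_cnj_power)
  moreover have "gauss_bound n (cnj (c1 * c2 * c3)) = gauss_bound n (c1 * c2 * c3)"
    unfolding gauss_bound_def gauss_norm_def complex_cnj_one_iff by (rule refl)
  ultimately show ?thesis
    unfolding sum_gauss_triple[OF assms] using norm_gauss_le[of "cnj (c1 * c2 * c3)" n]
    by (simp add: norm_mult norm_gauss assms gauss_norm_def mult_left_mono)
qed

lemma Csum_gpow: "Csum i p a = (\<Sum>s<L. ep p (a * int (gpow (i * s))))"
proof -
  have "Csum i p a = (\<Sum>m\<in>{0<..<p}. ep p (a * int m ^ i))"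
    unfolding Csum_def coprime_units by (intro sum.cong refl) (simp add: ep_def)
  also have "\<dots> = (\<Sum>s<L. ep p (a * int (gpow s) ^ i))"
    by (rule sum_units_gpow)
  also have "\<dots> = (\<Sum>s<L. ep p (a * int (gpow (i * s))))"
    by (intro sum.cong refl ep_cong p_pos cong_mult cong_refl gpow_power_cong)
  finally show ?thesis .
qed

text \<open>Orthogonality of the characters of order dividing \<open>d\<close> detects the \<open>d\<close>-th powers.\<close>
lemma Csum_eq_sum_gauss:
  assumes "d dvd L"
  shows "Csum d p a = (\<Sum>j<d. gauss (unity_root d ^ j) a)"
proof -
  have d: "d > 0"
    using assms L_pos by (auto intro!: gr0I)
  obtain M where LM: "L = d * M"
    using assms ..
  define X where "X t = ep p (a * int (gpow t))" for t
  have "(\<Sum>j<d. gauss (unity_root d ^ j) a) = (\<Sum>t<L. (\<Sum>j<d. (unity_root d ^ j) ^ t) * X t)"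
    unfolding gauss_def X_def sum_distrib_right by (rule sum.swap)
  also have "\<dots> = (\<Sum>t<d * M. if d dvd t then of_nat d * X t else 0)"
    by (intro sum.cong) (simp_all add: sum_unity_root_powers[OF d] LM)
  also have "\<dots> = of_nat d * (\<Sum>s<M. X (d * s))"
    by (simp add: sum_lessThan_multiples[OF d] sum_distrib_left)
  also have "\<dots> = (\<Sum>s<d * M. X (d * s))"
  proof -
    have "X (d * (s + M)) = X (d * s)" for s
      using gpow_mod_L[of "d * s + L"] gpow_mod_L[of "d * s"]
      by (simp add: X_def LM distrib_left)
    then show ?thesis
      using sum_lessThan_periodic[of "\<lambda>s. X (d * s)" M d] by (simp add: mult.commute)
  qed
  also have "\<dots> = Csum d p a"
    by (simp add: Csum_gpow X_def LM)
  finally show ?thesis ..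
qed

lemma Csum_coprime:
  assumes "coprime i L"
  shows "Csum i p a = Csum 1 p a"
proof -
  have "Csum i p a = (\<Sum>s<L. ep p (a * int (gpow ((i * s + 0) mod L))))"
    by (simp add: Csum_gpow gpow_mod_L)
  also have "\<dots> = Csum 1 p a"
    using sum_lessThan_affine_mod[OF assms, of "\<lambda>t. ep p (a * int (gpow t))" 0]
    by (simp add: Csum_gpow)
  finally show ?thesis .
qed

end

section \<open>The local factors\<close>

text \<open>Majorant for the sum over \<open>i < 2\<close>, \<open>j, k < d\<close> of
  \<open>|\<tau>(\<chi>\<^sub>i)| |\<tau>(\<psi>\<^sub>j)| |\<tau>(\<psi>\<^sub>k)| |\<tau>(\<chi>\<^sub>i\<psi>\<^sub>j\<psi>\<^sub>k, -n)|\<close>, where \<open>\<chi>\<^sub>i\<close> runs over the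
  characters of order dividing 2 and \<open>\<psi>\<^sub>j\<close> over those of order dividing \<open>d\<close>;
  here \<open>s = \<surd>p\<close>, \<open>l = p - 1\<close>, and \<open>b\<close> tells whether \<open>p\<close> divides \<open>n\<close>.\<close>
definition char_weight_sum :: "nat \<Rightarrow> real \<Rightarrow> real \<Rightarrow> bool \<Rightarrow> real" where
  "char_weight_sum d s l b = (\<Sum>j<d. \<Sum>k<d. \<Sum>i<2::nat.
     (if even i then 1 else s) * (if d dvd j then 1 else s) * (if d dvd k then 1 else s) *
     (if b then (if even i \<and> d dvd j + k then l else 0)
      else (if even i \<and> d dvd j + k then 1 else s)))"

lemma char_weight_sum_3:
  "char_weight_sum 3 s l b =
     (if b then 2 * l * s ^ 2 + l else 4 * s ^ 4 + 6 * s ^ 3 + 7 * s ^ 2 + 1)"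
proof -
  have "{..<2::nat} = {0, 1}" "{..<3::nat} = {0, 1, 2}"
    by auto
  moreover have "(3::nat) dvd Suc (Suc (Suc 0))" "\<not> (3::nat) dvd Suc 0" "\<not> (3::nat) dvd 2"
    "\<not> (3::nat) dvd Suc (Suc 0)" "\<not> (3::nat) dvd Suc (Suc (Suc (Suc 0)))"
    by presburger+
  ultimately show ?thesis
    by (simp add: char_weight_sum_def algebra_simps power2_eq_square power3_eq_cube power4_eq_xxxx)
qed

lemma char_weight_sum_1: "char_weight_sum 1 s l b = (if b then l else s ^ 2 + 1)"
proof -
  have "{..<2::nat} = {0, 1}"
    by auto
  then show ?thesis
    by (simp add: char_weight_sum_def algebra_simps power2_eq_square)
qed

context primroot_mod_prime
begin

definition Ssum :: "int \<Rightarrow> complex" where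
  "Ssum n = (\<Sum>a\<in>{0<..<p}. Csum 2 p (int a) * Csum 3 p (int a) ^ 2 * ep p (- (int a * n)))"

lemma Aterm_eq_Ssum: "Aterm n p = - Ssum n / of_nat L ^ 4"
proof -
  have "moebius p = -1"
    using prime_p by (simp add: moebius_def squarefree_prime prime_prime_factors)
  moreover have "Aterm n p = of_int (moebius p) / of_nat L ^ 4 * Ssum n"
    unfolding Aterm_def Ssum_def totient_p coprime_units
    by (intro arg_cong2[where f = "(*)"] refl sum.cong) (simp_all add: ep_def)
  ultimately show ?thesis
    by simp
qed

text \<open>The substitution \<open>a \<mapsto> p - a\<close> conjugates every summand.\<close>
lemma cnj_Ssum: "cnj (Ssum n) = Ssum n"
proof -
  have ep_neg: "ep p (int (p - a) * x) = ep p (- (int a * x))" if "a \<le> p" for a x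
    using that by (intro ep_cong p_pos) (simp add: cong_iff_dvd_diff of_nat_diff algebra_simps)
  define f where "f a = Csum 2 p (int a) * Csum 3 p (int a) ^ 2 * ep p (- (int a * n))" for a
  have "Csum i p (int (p - a)) = cnj (Csum i p (int a))" if "a \<le> p" for i a
    unfolding Csum_gpow cnj_sum cnj_ep by (simp add: ep_neg[OF that])
  then have "f (p - a) = cnj (f a)" if "a \<in> {0<..<p}" for a
    using that ep_neg[of a "- n"] by (simp add: f_def cnj_ep)
  then have "(\<Sum>a\<in>{0<..<p}. f (p - a)) = cnj (\<Sum>a\<in>{0<..<p}. f a)"
    by (simp add: cnj_sum)
  moreover have "(\<Sum>a\<in>{0<..<p}. f (p - a)) = (\<Sum>a\<in>{0<..<p}. f a)"
    by (rule sum.reindex_bij_witness[of _ "\<lambda>a. p - a" "\<lambda>a. p - a"]) auto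
  ultimately show ?thesis
    by (simp add: Ssum_def f_def)
qed

lemma norm_Ssum_le_char_weight_sum:
  assumes "odd d" "d dvd L" "\<And>a. Csum 3 p a = Csum d p a"
  shows "norm (Ssum n) \<le> char_weight_sum d (sqrt p) (real L) (int p dvd n)"
proof -
  define \<zeta> where "\<zeta> = unity_root d"
  define F where "F a j k i = gauss ((-1) ^ i) (int a) * gauss (\<zeta> ^ j) (int a) * gauss (\<zeta> ^ k) (int a)
    * ep p (- (int a * n))" for a j k i :: nat
  have d: "d > 0"
    using assms(1) by (rule odd_pos)
  have Csum_2: "Csum 2 p a = (\<Sum>i<2. gauss ((-1) ^ i) a)" for a
    using Csum_eq_sum_gauss[OF two_dvd_L] by simp
  have "Ssum n = (\<Sum>a\<in>{0<..<p}. \<Sum>j<d. \<Sum>k<d. \<Sum>i<2. F a j k i)"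
    unfolding Ssum_def F_def \<zeta>_def assms(3) Csum_eq_sum_gauss[OF assms(2)] Csum_2
    by (intro sum.cong refl sum_mult_sum_square)
  also have "norm \<dots> \<le> char_weight_sum d (sqrt p) (real L) (int p dvd n)"
    unfolding char_weight_sum_def
  proof (rule norm_sum_triple_sum_le)
    fix i j k :: nat
    have roots: "((-1) ^ i) ^ L = (1 :: complex)" "(\<zeta> ^ j) ^ L = 1" "(\<zeta> ^ k) ^ L = 1"
      using two_dvd_L assms(2) unity_root_power_eq_1_iff[OF d]
      by (auto simp: \<zeta>_def simp flip: power_mult)
    have "(-1) ^ i * \<zeta> ^ j * \<zeta> ^ k = 1 \<longleftrightarrow> even i \<and> d dvd j + k"
      using neg_one_power_mult_unity_root_eq_1_iff[OF assms(1), of i "j + k"]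
      by (simp add: \<zeta>_def power_add mult.assoc)
    then have "gauss_bound n ((-1) ^ i * \<zeta> ^ j * \<zeta> ^ k) =
      (if int p dvd n then (if even i \<and> d dvd j + k then real L else 0)
       else (if even i \<and> d dvd j + k then 1 else sqrt p))"
      by (simp add: gauss_bound_def gauss_norm_def)
    moreover have "gauss_norm ((-1) ^ i) = (if even i then 1 else sqrt p)"
      using neg_one_power_mult_unity_root_eq_1_iff[OF assms(1), of i 0]
      by (simp add: gauss_norm_def)
    moreover have "gauss_norm (\<zeta> ^ m) = (if d dvd m then 1 else sqrt p)" for m
      by (simp add: gauss_norm_def \<zeta>_def unity_root_power_eq_1_iff[OF d])
    ultimately show "norm (\<Sum>a\<in>{0<..<p}. F a j k i) \<le>
      (if even i then 1 else sqrt p) * (if d dvd j then 1 else sqrt p) * (if d dvd k then 1 else sqrt p) *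
      (if int p dvd n then (if even i \<and> d dvd j + k then real L else 0)
       else (if even i \<and> d dvd j + k then 1 else sqrt p))"
      using norm_sum_gauss_triple_le[OF roots, of n] by (simp only: F_def)
  qed
  finally show ?thesis .
qed

lemma norm_Ssum_le:
  "norm (Ssum n) \<le> (if 3 dvd L then 4 * real p ^ 2 + 6 * real p * sqrt p + 7 * real p + 1
                     else real p + 1)"
proof -
  have sqrt_p: "sqrt p ^ 2 = real p" "sqrt p ^ 3 = real p * sqrt p" "sqrt p ^ 4 = real p ^ 2"
    by (simp_all add: power3_eq_cube power4_eq_xxxx power2_eq_square)
  have "real L \<le> real p"
    by (simp add: L_def)
  show ?thesis
  proof (cases "3 dvd L")
    case True
    then have "norm (Ssum n) \<le> char_weight_sum 3 (sqrt p) (real L) (int p dvd n)"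
      by (intro norm_Ssum_le_char_weight_sum) auto
    moreover have "2 * real L * real p + real L \<le> 4 * real p ^ 2 + 6 * real p * sqrt p + 7 * real p + 1"
    proof -
      have "real L * real p \<le> real p * real p"
        using \<open>real L \<le> real p\<close> by (simp add: mult_right_mono)
      moreover have "0 \<le> real p * sqrt p" "0 \<le> real p * real p"
        by simp_all
      ultimately show ?thesis
        using \<open>real L \<le> real p\<close> unfolding power2_eq_square mult.assoc by linarith
    qed
    ultimately show ?thesis
      using True by (auto simp: char_weight_sum_3 sqrt_p split: if_splits)
  next
    case False
    then have "coprime 3 L"
      by (intro prime_imp_coprime) auto
    then have "norm (Ssum n) \<le> char_weight_sum 1 (sqrt p) (real L) (int p dvd n)"
      using Csum_coprime[of 3] by (intro norm_Ssum_le_char_weight_sum) simp_all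
    then show ?thesis
      unfolding char_weight_sum_1
      using False \<open>real L \<le> real p\<close> by (auto simp: sqrt_p split: if_splits)
  qed
qed

end

definition cubic_bound :: "real \<Rightarrow> real" where
  "cubic_bound x = (4 * x ^ 2 + 6 * x * sqrt x + 7 * x + 1) / (x - 1) ^ 4"

definition quadratic_bound :: "real \<Rightarrow> real" where
  "quadratic_bound x = (x + 1) / (x - 1) ^ 4"

lemma cubic_bound_nonneg: "2 \<le> x \<Longrightarrow> 0 \<le> cubic_bound x"
  unfolding cubic_bound_def by (intro divide_nonneg_pos) auto

lemma quadratic_bound_nonneg: "2 \<le> x \<Longrightarrow> 0 \<le> quadratic_bound x"
  unfolding quadratic_bound_def by (intro divide_nonneg_pos) auto

lemma Aterm_prime_real_bound:
  assumes "prime p" "5 \<le> p"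
  shows "Aterm n p \<in> \<real>"
    and "norm (Aterm n p) \<le> (if 3 dvd p - 1 then cubic_bound p else quadratic_bound p)"
proof -
  obtain g where "residue_primroot p g"
    using prime_primitive_root_exists[OF _ assms(1)] assms(2) by auto
  moreover have "odd p"
    using assms prime_odd_nat by fastforce
  ultimately interpret primroot_mod_prime p g
    using assms by unfold_locales auto
  show "Aterm n p \<in> \<real>"
    using cnj_Ssum[of n] by (simp add: Aterm_eq_Ssum Reals_cnj_iff)
  have "real L = real p - 1"
    using p_gt_1 by (simp add: L_def)
  moreover have "norm (Aterm n p) = norm (Ssum n) / real L ^ 4"
    by (simp add: Aterm_eq_Ssum norm_divide norm_power)
  ultimately show "norm (Aterm n p) \<le> (if 3 dvd p - 1 then cubic_bound p else quadratic_bound p)"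
    using norm_Ssum_le[of n] L_pos
    by (auto simp: cubic_bound_def quadratic_bound_def L_def intro: divide_right_mono)
qed

section \<open>The product over the primes\<close>

lemma quadratic_bound_le_telescope:
  fixes x :: real
  assumes "17 \<le> x"
  shows "quadratic_bound x \<le> 1 / (x - 2) ^ 2 - 1 / (x - 1) ^ 2"
proof -
  define y where "y = x - 2"
  have y: "15 \<le> y"
    using assms by (simp add: y_def)
  have "1 / y ^ 2 - 1 / (y + 1) ^ 2 = (2 * y + 1) / (y ^ 2 * (y + 1) ^ 2)"
    using y by (simp add: field_simps) (simp add: algebra_simps power2_eq_square)
  moreover have "(2 * y + 1) * (y + 1) ^ 4 - (y + 3) * (y ^ 2 * (y + 1) ^ 2)
      = (y + 1) ^ 2 * (y ^ 3 + 2 * y ^ 2 + 4 * y + 1)"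
    by (simp add: algebra_simps power2_eq_square power3_eq_cube power4_eq_xxxx)
  moreover have "0 \<le> (y + 1) ^ 2 * (y ^ 3 + 2 * y ^ 2 + 4 * y + 1)"
    using y by (intro mult_nonneg_nonneg) auto
  ultimately have "(y + 3) * (y ^ 2 * (y + 1) ^ 2) \<le> (2 * y + 1) * (y + 1) ^ 4"
    by linarith
  moreover have "0 < (y + 1) ^ 4" "0 < y ^ 2 * (y + 1) ^ 2"
    using y by simp_all
  ultimately have "(y + 3) / (y + 1) ^ 4 \<le> (2 * y + 1) / (y ^ 2 * (y + 1) ^ 2)"
    by (simp add: divide_simps)
  then have "(y + 3) / (y + 1) ^ 4 \<le> 1 / y ^ 2 - 1 / (y + 1) ^ 2"
    using \<open>1 / y ^ 2 - 1 / (y + 1) ^ 2 = _\<close> by simp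
  then show ?thesis
    by (simp add: quadratic_bound_def y_def algebra_simps)
qed

lemma cubic_bound_le_telescope:
  fixes x :: real
  assumes "19 \<le> x"
  shows "cubic_bound x \<le> (5/6) / (x - 7) - (5/6) / (x - 1)"
proof -
  define A where "A = 4 * x ^ 2 + 6 * x * sqrt x + 7 * x + 1"
  text \<open>AM-GM: \<open>\<surd>x \<le> x / 10 + 5 / 2\<close>.\<close>
  have "0 \<le> (sqrt x - 5) ^ 2"
    by simp
  also have "(sqrt x - 5) ^ 2 = x - 10 * sqrt x + 25"
    using assms by (simp add: power2_eq_square algebra_simps)
  finally have "6 * x * sqrt x \<le> 6 * x * (x / 10 + 5 / 2)"
    using assms by (intro mult_left_mono) auto
  then have num: "5 * A \<le> 23 * x ^ 2 + 110 * x + 5"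
    by (simp add: A_def algebra_simps power2_eq_square)
  have "25 * (x - 1) ^ 3 - (23 * x ^ 2 + 110 * x + 5) * (x - 7) = 2 * x * ((x - 6) ^ 2 + 384) + 10"
    by (simp add: algebra_simps power2_eq_square power3_eq_cube)
  moreover have "0 \<le> 2 * x * ((x - 6) ^ 2 + 384)"
    using assms by (intro mult_nonneg_nonneg) auto
  ultimately have den: "(23 * x ^ 2 + 110 * x + 5) * (x - 7) \<le> 25 * (x - 1) ^ 3"
    by linarith
  have pos: "0 < (x - 1) ^ 4" "0 < (x - 7) * (x - 1)"
    using assms by simp_all
  from mult_right_mono[OF num less_imp_le[OF pos(2)]]
  have "5 * (A * ((x - 7) * (x - 1))) \<le> (23 * x ^ 2 + 110 * x + 5) * (x - 7) * (x - 1)"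
    by (simp only: mult.assoc)
  also have "\<dots> \<le> 25 * (x - 1) ^ 3 * (x - 1)"
    using den assms by (intro mult_right_mono) auto
  also have "\<dots> = 5 * (5 * (x - 1) ^ 4)"
    by (simp add: power3_eq_cube power4_eq_xxxx mult_ac)
  finally have ineq: "A * ((x - 7) * (x - 1)) \<le> 5 * (x - 1) ^ 4"
    by (rule mult_left_le_imp_le) simp
  have "cubic_bound x = A / (x - 1) ^ 4"
    unfolding cubic_bound_def A_def ..
  also have "\<dots> \<le> 5 / ((x - 7) * (x - 1))"
    unfolding pos_divide_le_eq[OF pos(1)] times_divide_eq_left pos_le_divide_eq[OF pos(2)]
    by (rule ineq)
  also have "\<dots> = (5/6) / (x - 7) - (5/6) / (x - 1)"
  proof -
    have "x - 7 \<noteq> 0" "x - 1 \<noteq> 0"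
      using assms by auto
    then have "(5/6) / (x - 7) - (5/6) / (x - 1) = ((5/6) * (x - 1) - (5/6) * (x - 7)) / ((x - 7) * (x - 1))"
      by (rule diff_frac_eq)
    also have "(5/6) * (x - 1) - (5/6) * (x - 7) = (5::real)"
      by (simp add: field_simps)
    finally show ?thesis ..
  qed
  finally show ?thesis .
qed

lemma sum_le_telescope:
  fixes f F :: "nat \<Rightarrow> real"
  assumes "\<And>k. f k \<le> F k - F (Suc k)" "\<And>k. 0 \<le> F k"
  shows "(\<Sum>k<N. f k) \<le> F 0"
proof -
  have "(\<Sum>k<N. f k) \<le> (\<Sum>k<N. F k - F (Suc k))"
    by (intro sum_mono assms)
  also have "\<dots> = F 0 - F N"
    by (rule sum_lessThan_telescope')
  finally show ?thesis
    using assms(2)[of N] by linarith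
qed

lemma sum_quadratic_bound_tail:
  "(\<Sum>k<N. if 17 \<le> k then quadratic_bound (real k) else 0) \<le> 1 / 225"
proof -
  define F where "F k = 1 / (real (max k 17) - 2) ^ 2" for k
  have "(if 17 \<le> k then quadratic_bound (real k) else 0) \<le> F k - F (Suc k)" for k
  proof (cases "17 \<le> k")
    case True
    moreover have "real (Suc k) - 2 = real k - 1"
      by simp
    ultimately show ?thesis
      using quadratic_bound_le_telescope[of "real k"] by (simp add: F_def max_def)
  qed (simp add: F_def max_def)
  then have "(\<Sum>k<N. if 17 \<le> k then quadratic_bound (real k) else 0) \<le> F 0"
    by (rule sum_le_telescope) (simp add: F_def)
  then show ?thesis
    by (simp add: F_def)
qed

lemma sum_cubic_bound_tail:
  "(\<Sum>k<N. if 19 \<le> k \<and> k mod 6 = 1 then cubic_bound (real k) else 0) \<le> 5 / 72"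
proof -
  define S where "S = {k \<in> {..<N}. 19 \<le> k \<and> k mod 6 = 1}"
  have "(\<Sum>k<N. if 19 \<le> k \<and> k mod 6 = 1 then cubic_bound (real k) else 0) = (\<Sum>k\<in>S. cubic_bound k)"
    unfolding S_def by (rule sum.inter_filter[symmetric]) simp
  also have "\<dots> \<le> (\<Sum>k\<in>(\<lambda>j. 6 * j + 19) ` {..<N}. cubic_bound k)"
  proof (rule sum_mono2)
    show "S \<subseteq> (\<lambda>j. 6 * j + 19) ` {..<N}"
    proof
      fix k
      assume "k \<in> S"
      then have k: "k < N" "19 \<le> k" "k mod 6 = 1"
        by (auto simp: S_def)
      have "k = 6 * ((k - 19) div 6) + 19"
        using k(2,3) by presburger
      moreover have "(k - 19) div 6 < N"
        using k(1) div_le_dividend[of "k - 19" 6] by linarith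
      ultimately show "k \<in> (\<lambda>j. 6 * j + 19) ` {..<N}"
        by blast
    qed
  qed (auto intro!: cubic_bound_nonneg)
  also have "\<dots> = (\<Sum>j<N. cubic_bound (6 * real j + 19))"
    by (subst sum.reindex) (auto simp: inj_on_def)
  also have "\<dots> \<le> (5/6) / (6 * real 0 + 12)"
  proof (rule sum_le_telescope)
    fix j
    have "cubic_bound (6 * real j + 19) \<le> (5/6) / (6 * real j + 19 - 7) - (5/6) / (6 * real j + 19 - 1)"
      by (rule cubic_bound_le_telescope) simp
    also have "\<dots> = (5/6) / (6 * real j + 12) - (5/6) / (6 * real (Suc j) + 12)"
      by (simp add: algebra_simps)
    finally show "cubic_bound (6 * real j + 19) \<le> (5/6) / (6 * real j + 12) - (5/6) / (6 * real (Suc j) + 12)" .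
  qed simp
  finally show ?thesis
    by simp
qed

definition tail_majorant :: "nat \<Rightarrow> real" where
  "tail_majorant k = (if 17 \<le> k then quadratic_bound k else 0)
     + (if 19 \<le> k \<and> k mod 6 = 1 then cubic_bound k else 0)"

lemma sum_tail_majorant_le: "(\<Sum>k<N. tail_majorant k) \<le> 5 / 72 + 1 / 225"
  using sum_quadratic_bound_tail[of N] sum_cubic_bound_tail[of N]
  by (simp add: tail_majorant_def sum.distrib)

lemma tail_majorant_nonneg: "0 \<le> tail_majorant k"
  by (simp add: tail_majorant_def cubic_bound_nonneg quadratic_bound_nonneg)

lemma norm_Aterm_le_tail_majorant:
  assumes "prime p" "17 \<le> p"
  shows "norm (Aterm n p) \<le> tail_majorant p"
proof -
  have bound: "norm (Aterm n p) \<le> (if 3 dvd p - 1 then cubic_bound p else quadratic_bound p)"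
    using assms by (intro Aterm_prime_real_bound(2)) auto
  show ?thesis
  proof (cases "3 dvd p - 1")
    case True
    have "odd p"
      using assms prime_odd_nat by fastforce
    with True assms(2) have "19 \<le> p \<and> p mod 6 = 1"
      by presburger
    then have "tail_majorant p = quadratic_bound p + cubic_bound p"
      using assms(2) by (simp add: tail_majorant_def)
    moreover have "0 \<le> quadratic_bound p"
      using assms(2) by (simp add: quadratic_bound_nonneg)
    ultimately show ?thesis
      using bound[unfolded if_P[OF True]] by linarith
  next
    case False
    have "quadratic_bound p \<le> tail_majorant p"
      using assms(2) by (simp add: tail_majorant_def cubic_bound_nonneg)
    then show ?thesis
      using bound[unfolded if_not_P[OF False]] by linarith
  qed
qed

lemma has_prod_one_plus_ge:
  fixes a y :: "nat \<Rightarrow> real"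
  assumes ay: "\<And>k. \<bar>a k\<bar> \<le> y k" and sum_y: "\<And>N. (\<Sum>k<N. y k) \<le> B" and "B < 1"
  shows "\<exists>P. (\<lambda>k. 1 + a k) has_prod P \<and> 1 - B \<le> P"
proof -
  have y_nonneg: "0 \<le> y k" for k
    using ay[of k] by linarith
  have y_le: "y k \<le> B" for k
    using member_le_sum[of k "{..<Suc k}" y] y_nonneg sum_y[of "Suc k"] by simp
  then have y_le_1: "y k \<le> 1" for k
    using \<open>B < 1\<close> less_imp_le order.trans by blast
  have "summable (\<lambda>k. \<bar>a k\<bar>)"
    by (rule summable_comparison_test'[OF summableI_nonneg_bounded[OF y_nonneg sum_y]]) (simp add: ay)
  moreover have "a k \<noteq> -1" for k
    using ay[of k] y_le[of k] \<open>B < 1\<close> by auto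
  ultimately have "convergent_prod (\<lambda>k. 1 + a k)"
    by (rule summable_imp_convergent_prod_real)
  then obtain P where P: "(\<lambda>k. 1 + a k) has_prod P"
    using convergent_prod_has_prod_iff by blast
  have "1 - B \<le> (\<Prod>k<N. 1 + a k)" for N
  proof -
    have "1 - B \<le> 1 - (\<Sum>k<N. y k)"
      using sum_y[of N] by simp
    also have "\<dots> \<le> (\<Prod>k<N. 1 - y k)"
      using y_nonneg y_le_1 by (intro Weierstrass_prod_ineq) simp
    also have "\<dots> \<le> (\<Prod>k<N. 1 + a k)"
    proof (rule prod_mono)
      fix k
      show "0 \<le> 1 - y k \<and> 1 - y k \<le> 1 + a k"
        using ay[of k] y_le_1[of k] by linarith
    qed
    finally show ?thesis .
  qed
  then have "1 - B \<le> P"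
    using LIMSEQ_le_const[OF has_prod_imp_tendsto'[OF P]] by blast
  with P show ?thesis
    by blast
qed

lemma Aterm_tail_has_prod:
  "\<exists>P. ((\<lambda>p::nat. if prime p \<and> 17 \<le> p then 1 + Aterm n p else 1) has_prod complex_of_real P)
     \<and> 1 - (5 / 72 + 1 / 225) \<le> P"
proof -
  define a where "a k = (if prime k \<and> 17 \<le> k then Re (Aterm n k) else 0)" for k
  have "\<bar>a k\<bar> \<le> tail_majorant k" for k
  proof (cases "prime k \<and> 17 \<le> k")
    case True
    then have "\<bar>a k\<bar> \<le> norm (Aterm n k)"
      using abs_Re_le_cmod[of "Aterm n k"] by (simp add: a_def)
    also have "\<dots> \<le> tail_majorant k"
      using True by (intro norm_Aterm_le_tail_majorant) auto
    finally show ?thesis .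
  next
    case False
    then have "a k = 0"
      unfolding a_def by (rule if_not_P)
    then show ?thesis
      by (simp add: tail_majorant_nonneg)
  qed
  then have "\<exists>P. (\<lambda>k. 1 + a k) has_prod P \<and> 1 - (5 / 72 + 1 / 225) \<le> P"
    by (intro has_prod_one_plus_ge[OF _ sum_tail_majorant_le]) simp_all
  then obtain P where P: "(\<lambda>k. 1 + a k) has_prod P" "1 - (5 / 72 + 1 / 225) \<le> P"
    by blast
  have factor_eq: "(if prime k \<and> 17 \<le> k then 1 + Aterm n k else 1) = complex_of_real (1 + a k)" for k
  proof (cases "prime k \<and> 17 \<le> k")
    case True
    then have "Aterm n k \<in> \<real>"
      by (intro Aterm_prime_real_bound(1)) auto
    then show ?thesis
      using True by (simp add: a_def of_real_Re)
  next
    case False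
    then show ?thesis
      unfolding a_def if_not_P[OF False] by simp
  qed
  have "(\<lambda>k. complex_of_real (1 + a k)) has_prod complex_of_real P"
    using P(1) by (simp only: has_prod_of_real_iff)
  then have "(\<lambda>p::nat. if prime p \<and> 17 \<le> p then 1 + Aterm n p else 1) has_prod complex_of_real P"
    by (simp only: factor_eq)
  with P(2) show ?thesis
    by blast
qed

theorem lemma2p3:
  fixes n :: int
  shows "\<exists>P r. ((\<lambda>p::nat. if prime p \<and> p \<ge> 17 then 1 + Aterm n p else 1) has_prod P) \<and>
           (1 + Aterm n 5) * (1 + Aterm n 11) * P = complex_of_real r \<and>
           r \<ge> 0.902985"
proof -
  obtain P where P: "(\<lambda>p::nat. if prime p \<and> 17 \<le> p then 1 + Aterm n p else 1) has_prod complex_of_real P"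
    and P_ge: "1 - (5 / 72 + 1 / 225) \<le> P"
    using Aterm_tail_has_prod by blast
  define a5 a11 where "a5 = Re (Aterm n 5)" and "a11 = Re (Aterm n 11)"
  have "Aterm n 5 = of_real a5" "Aterm n 11 = of_real a11"
    using Aterm_prime_real_bound(1)[of 5 n] Aterm_prime_real_bound(1)[of 11 n]
    by (simp_all add: a5_def a11_def of_real_Re)
  then have eq: "(1 + Aterm n 5) * (1 + Aterm n 11) * P = complex_of_real ((1 + a5) * (1 + a11) * P)"
    by simp
  have "\<bar>a5\<bar> \<le> 6 / 256" "\<bar>a11\<bar> \<le> 12 / 10000"
    using Aterm_prime_real_bound(2)[of 5 n] Aterm_prime_real_bound(2)[of 11 n]
      abs_Re_le_cmod[of "Aterm n 5"] abs_Re_le_cmod[of "Aterm n 11"]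
    by (simp_all add: a5_def a11_def quadratic_bound_def)
  then have "(1 - 6 / 256) * (1 - 12 / 10000) * (1 - (5 / 72 + 1 / 225)) \<le> (1 + a5) * (1 + a11) * P"
    using P_ge by (intro mult_mono) auto
  then have "(0.902985::real) \<le> (1 + a5) * (1 + a11) * P"
    by simp
  with P eq show ?thesis
    by blast
qed

end
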